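(* Let $\sigma_0,\sigma_\epsilon>0$, $\theta_0\in\mathbb{R}$, prior $\Theta\sim N(\theta_0,\sigma_0^2)$, signal $X=\Theta+\epsilon$ with $\epsilon\sim\mathrm{Laplace}(0,\sigma_\epsilon)$ independent of $\Theta$, and let $\theta_1(x)=\mathbb{E}[\Theta\mid X=x]$. Then for large signals the shift is asymptotically constant: $\theta_1(x)-\theta_0\approx\operatorname{sgn}(x-\theta_0)\frac{\sigma_0^2}{\sigma_\epsilon}$, i.e. $$\lim_{x\to+\infty}(\theta_1(x)-\theta_0)=\frac{\sigma_0^2}{\sigma_\epsilon},\qquad \lim_{x\to-\infty}(\theta_1(x)-\theta_0)=-\frac{\sigma_0^2}{\sigma_\epsilon}.$$
   Context: $\mathrm{Laplace}(\mu,s)$ has density $t\mapsto\frac{1}{2s}e^{-|t-\mu|/s}$. The posterior mean is $\theta_1(x)=\frac{\int\theta f_\Theta(\theta)l_\epsilon(x-\theta)d\theta}{\int f_\Theta(\theta)l_\epsilon(x-\theta)d\theta}$. *)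

theory Defs
  imports "HOL-Probability.Probability"
begin

definition laplace_density :: "real \<Rightarrow> real \<Rightarrow> real \<Rightarrow> real" where
  "laplace_density \<mu> s t = 1 / (2 * s) * exp (- \<bar>t - \<mu>\<bar> / s)"

definition posterior_mean :: "(real \<Rightarrow> real) \<Rightarrow> (real \<Rightarrow> real) \<Rightarrow> real \<Rightarrow> real" where
  "posterior_mean f l x =
     (\<integral>\<theta>. \<theta> * f \<theta> * l (x - \<theta>) \<partial>lborel) / (\<integral>\<theta>. f \<theta> * l (x - \<theta>) \<partial>lborel)"

end

theory Submission
  imports Defs
begin

text \<open>For a signal \<open>x = c t\<close> with \<open>c = \<plusminus>1\<close> and \<open>t \<ge> c \<theta>\<close>, the Laplace likelihood is
  \<open>l (x - \<theta>) = exp (c \<theta> / b - t / b) / (2 b)\<close>: up to a factor independent of \<open>\<theta>\<close> it is the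
  exponential tilt \<open>exp (c \<theta> / b)\<close>, and for every \<open>t\<close> the left side is at most the right side, which
  gives an integrable dominating function.  By dominated convergence the
  posterior therefore tends to the tilted prior, and tilting \<open>N(\<mu>, s\<^sup>2)\<close> by \<open>exp (c \<theta> / b)\<close> gives
  \<open>N(\<mu> + c s\<^sup>2 / b, s\<^sup>2)\<close>, whose mean is shifted by \<open>c s\<^sup>2 / b\<close>.\<close>

lemma normal_density_mult_exp:
  fixes \<mu> \<sigma> a x :: real
  shows "normal_density \<mu> \<sigma> x * exp (a * x) =
         exp (a * \<mu> + a\<^sup>2 * \<sigma>\<^sup>2 / 2) * normal_density (\<mu> + a * \<sigma>\<^sup>2) \<sigma> x"
proof (cases "\<sigma> = 0")
  case False
  have "-(x - \<mu>)\<^sup>2 / (2 * \<sigma>\<^sup>2) + a * x = (a * \<mu> + a\<^sup>2 * \<sigma>\<^sup>2 / 2) + -(x - (\<mu> + a * \<sigma>\<^sup>2))\<^sup>2 / (2 * \<sigma>\<^sup>2)"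
    using False by (simp add: field_simps power2_eq_square)
  then show ?thesis
    unfolding normal_density_def by (simp add: exp_add[symmetric] mult_ac)
qed (simp add: normal_density_def)

lemma laplace_density_nonneg: "s \<ge> 0 \<Longrightarrow> 0 \<le> laplace_density \<mu> s t"
  by (simp add: laplace_density_def)

lemma exp_mult_laplace_density:
  "exp (t / b) * laplace_density 0 b (x - \<theta>) = exp ((t - \<bar>x - \<theta>\<bar>) / b) / (2 * b)"
proof -
  have "exp (t / b) * exp (- \<bar>x - \<theta>\<bar> / b) = exp ((t - \<bar>x - \<theta>\<bar>) / b)"
    by (simp add: exp_add[symmetric] diff_divide_distrib)
  then show ?thesis
    by (simp add: laplace_density_def)
qed

lemma laplace_density_tail_le:
  fixes b c t \<theta> :: real
  assumes "b > 0" and "\<bar>c\<bar> = 1"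
  shows "exp (t / b) * laplace_density 0 b (c * t - \<theta>) \<le> exp (c * \<theta> / b) / (2 * b)"
proof -
  have "t - \<bar>c * t - \<theta>\<bar> \<le> c * \<theta>"
    using assms(2) by (cases "c \<ge> 0") (auto simp: abs_if)
  then have "exp ((t - \<bar>c * t - \<theta>\<bar>) / b) \<le> exp (c * \<theta> / b)"
    using assms(1) by (simp add: divide_right_mono)
  then show ?thesis
    using assms(1) by (simp add: exp_mult_laplace_density divide_right_mono)
qed

lemma laplace_density_tail_eq:
  fixes b c t \<theta> :: real
  assumes "\<bar>c\<bar> = 1" and "t \<ge> c * \<theta>"
  shows "exp (t / b) * laplace_density 0 b (c * t - \<theta>) = exp (c * \<theta> / b) / (2 * b)"
proof -
  have "t - \<bar>c * t - \<theta>\<bar> = c * \<theta>"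
    using assms by (cases "c \<ge> 0") (auto simp: abs_if)
  then show ?thesis
    by (simp add: exp_mult_laplace_density)
qed

lemma tendsto_exp_mult_laplace_convolution:
  fixes f :: "real \<Rightarrow> real" and b c :: real
  assumes b: "b > 0" and c: "\<bar>c\<bar> = 1" and f_meas: "f \<in> borel_measurable borel"
    and f_int: "integrable lborel (\<lambda>\<theta>. f \<theta> * exp (c * \<theta> / b))"
  shows "((\<lambda>t. exp (t / b) * (\<integral>\<theta>. f \<theta> * laplace_density 0 b (c * t - \<theta>) \<partial>lborel))
           \<longlongrightarrow> (\<integral>\<theta>. f \<theta> * exp (c * \<theta> / b) \<partial>lborel) / (2 * b)) at_top"
proof -
  define F where "F \<theta> = f \<theta> * (exp (c * \<theta> / b) / (2 * b))" for \<theta>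
  define S where "S t \<theta> = f \<theta> * (exp (t / b) * laplace_density 0 b (c * t - \<theta>))" for t \<theta>
  have F_int: "integrable lborel F"
    unfolding F_def times_divide_eq_right by (intro integrable_divide f_int)
  have "((\<lambda>t. integral\<^sup>L lborel (S t)) \<longlongrightarrow> integral\<^sup>L lborel F) at_top"
  proof (rule integral_dominated_convergence_at_top[where w = "\<lambda>\<theta>. \<bar>F \<theta>\<bar>"])
    show "F \<in> borel_measurable lborel"
      using F_int by auto
    show "S t \<in> borel_measurable lborel" for t
      using f_meas unfolding S_def laplace_density_def by measurable
    show "integrable lborel (\<lambda>\<theta>. \<bar>F \<theta>\<bar>)"
      using F_int by (rule integrable_abs)
    show "AE \<theta> in lborel. ((\<lambda>t. S t \<theta>) \<longlongrightarrow> F \<theta>) at_top"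
    proof (rule AE_I2)
      fix \<theta>
      have "eventually (\<lambda>t. S t \<theta> = F \<theta>) at_top"
        using eventually_ge_at_top[of "c * \<theta>"]
        by eventually_elim (simp add: S_def F_def laplace_density_tail_eq[OF c])
      then show "((\<lambda>t. S t \<theta>) \<longlongrightarrow> F \<theta>) at_top"
        by (rule tendsto_eventually)
    qed
    show "\<forall>\<^sub>F t in at_top. AE \<theta> in lborel. norm (S t \<theta>) \<le> \<bar>F \<theta>\<bar>"
    proof (intro always_eventually allI AE_I2)
      fix t \<theta>
      show "norm (S t \<theta>) \<le> \<bar>F \<theta>\<bar>"
        unfolding S_def F_def norm_mult real_norm_def abs_mult
        using laplace_density_tail_le[OF b c, of t \<theta>] laplace_density_nonneg[of b] b
        by (intro mult_left_mono) auto
    qed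
  qed
  moreover have "integral\<^sup>L lborel (S t) = exp (t / b) * (\<integral>\<theta>. f \<theta> * laplace_density 0 b (c * t - \<theta>) \<partial>lborel)" for t
    unfolding S_def by (simp add: mult.left_commute[of "f _"])
  moreover have "integral\<^sup>L lborel F = (\<integral>\<theta>. f \<theta> * exp (c * \<theta> / b) \<partial>lborel) / (2 * b)"
    unfolding F_def times_divide_eq_right by (rule integral_divide_zero)
  ultimately show ?thesis
    by simp
qed

lemma tendsto_posterior_mean_normal_laplace:
  fixes \<mu> s b c :: real
  assumes s: "s > 0" and b: "b > 0" and c: "\<bar>c\<bar> = 1"
  shows "((\<lambda>t. posterior_mean (normal_density \<mu> s) (laplace_density 0 b) (c * t))
           \<longlongrightarrow> \<mu> + c * s\<^sup>2 / b) at_top"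
proof -
  define K where "K = exp (c / b * \<mu> + (c / b)\<^sup>2 * s\<^sup>2 / 2)"
  define \<mu>' where "\<mu>' = \<mu> + c * s\<^sup>2 / b"
  have tilt: "normal_density \<mu> s \<theta> * exp (c * \<theta> / b) = K * normal_density \<mu>' s \<theta>" for \<theta>
    using normal_density_mult_exp[of \<mu> s \<theta> "c / b"] by (simp add: K_def \<mu>'_def)
  have num: "((\<lambda>t. exp (t / b) * (\<integral>\<theta>. \<theta> * normal_density \<mu> s \<theta> * laplace_density 0 b (c * t - \<theta>) \<partial>lborel))
               \<longlongrightarrow> K * \<mu>' / (2 * b)) at_top"
  proof -
    have "(\<lambda>\<theta>. \<theta> * normal_density \<mu> s \<theta> * exp (c * \<theta> / b)) = (\<lambda>\<theta>. K * (normal_density \<mu>' s \<theta> * \<theta>))"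
      by (simp only: mult.assoc tilt) (simp add: mult_ac)
    then show ?thesis
      using tendsto_exp_mult_laplace_convolution[OF b c, of "\<lambda>\<theta>. \<theta> * normal_density \<mu> s \<theta>"] s
      by (simp add: integrable_normal_moment_nz_1 integral_normal_moment_nz_1)
  qed
  have den: "((\<lambda>t. exp (t / b) * (\<integral>\<theta>. normal_density \<mu> s \<theta> * laplace_density 0 b (c * t - \<theta>) \<partial>lborel))
               \<longlongrightarrow> K / (2 * b)) at_top"
    using tendsto_exp_mult_laplace_convolution[OF b c, of "normal_density \<mu> s"] s
    by (simp add: tilt)
  have "K > 0"
    by (simp add: K_def)
  then have "((\<lambda>t. posterior_mean (normal_density \<mu> s) (laplace_density 0 b) (c * t))
               \<longlongrightarrow> (K * \<mu>' / (2 * b)) / (K / (2 * b))) at_top"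
    unfolding posterior_mean_def
    using tendsto_divide[OF num den] b by simp
  then show ?thesis
    using \<open>K > 0\<close> b by (simp add: \<mu>'_def)
qed

theorem mainTheorem16:
  fixes \<sigma>\<^sub>0 \<sigma>\<^sub>\<epsilon> \<theta>\<^sub>0 :: real
  assumes "\<sigma>\<^sub>0 > 0" and "\<sigma>\<^sub>\<epsilon> > 0"
  defines "\<theta>\<^sub>1 \<equiv> posterior_mean (normal_density \<theta>\<^sub>0 \<sigma>\<^sub>0) (laplace_density 0 \<sigma>\<^sub>\<epsilon>)"
  shows "((\<lambda>x. \<theta>\<^sub>1 x - \<theta>\<^sub>0) \<longlongrightarrow> \<sigma>\<^sub>0\<^sup>2 / \<sigma>\<^sub>\<epsilon>) at_top \<and>
         ((\<lambda>x. \<theta>\<^sub>1 x - \<theta>\<^sub>0) \<longlongrightarrow> - (\<sigma>\<^sub>0\<^sup>2 / \<sigma>\<^sub>\<epsilon>)) at_bot"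
proof
  have "((\<lambda>x. \<theta>\<^sub>1 x - \<theta>\<^sub>0) \<longlongrightarrow> (\<theta>\<^sub>0 + \<sigma>\<^sub>0\<^sup>2 / \<sigma>\<^sub>\<epsilon>) - \<theta>\<^sub>0) at_top"
    using tendsto_posterior_mean_normal_laplace[OF assms(1,2), of 1 \<theta>\<^sub>0]
    unfolding \<theta>\<^sub>1_def by (intro tendsto_diff) simp_all
  then show "((\<lambda>x. \<theta>\<^sub>1 x - \<theta>\<^sub>0) \<longlongrightarrow> \<sigma>\<^sub>0\<^sup>2 / \<sigma>\<^sub>\<epsilon>) at_top"
    by simp
  have "((\<lambda>x. \<theta>\<^sub>1 (- x) - \<theta>\<^sub>0) \<longlongrightarrow> (\<theta>\<^sub>0 - \<sigma>\<^sub>0\<^sup>2 / \<sigma>\<^sub>\<epsilon>) - \<theta>\<^sub>0) at_top"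
    using tendsto_posterior_mean_normal_laplace[OF assms(1,2), of "-1" \<theta>\<^sub>0]
    unfolding \<theta>\<^sub>1_def by (intro tendsto_diff) simp_all
  then show "((\<lambda>x. \<theta>\<^sub>1 x - \<theta>\<^sub>0) \<longlongrightarrow> - (\<sigma>\<^sub>0\<^sup>2 / \<sigma>\<^sub>\<epsilon>)) at_bot"
    unfolding filterlim_at_bot_mirror by simp
qed

end
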